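(* Let $K$ be an algebraically closed field, complete with respect to a non-Archimedean norm $|\cdot|$ (possibly trivial), let $R>0$ be real and $K_R:=\{k\in K:|k|\le R\}$. Let $\mathcal{F}$ be an $R$-good filter. For each $B_q(k)\in\mathcal{F}$ define $|\cdot|_{B_q(k)}:\mathcal{A}_{\mathrm{Lin}}\to\mathbb{R}_{\ge0}$ by $|aT-b|_{B_q(k)}:=\max\{|ak-b|,\,|a|\cdot q\}$. Then the map $|aT-b|_{\mathcal{F}}:=\inf_{B_q(k)\in\mathcal{F}}|aT-b|_{B_q(k)}$ defines a bounded $K$-seminorm on $\mathcal{A}_{\mathrm{Lin}}$.
   Context: $\mathcal{A}_{\mathrm{Lin}}:=\{aT-b: a,b\in K\}$. An upper real is a subset $x\subseteq\mathbb{Q}$ (write $x<q$ for $q\in x$) that is upward closed and rounded; the right Dedekind section of a real $r$ is $\{q\in\mathbb{Q}:r<q\}$; $x\le y$ for upper reals means $\{q:y<q\}\subseteq\{q:x<q\}$; the infimum of a family of reals $x_i$ is the upper real $\bigcup_i\{q\in\mathbb{Q}:x_i<q\}$. A $K$-seminorm on $\mathcal{A}_{\mathrm{Lin}}$ is a map $|\cdot|_x$ from $\mathcal{A}_{\mathrm{Lin}}$ to inhabited upper reals $\ge0$ such that for $a\in K$, $f,f'\in\mathcal{A}_{\mathrm{Lin}}$: $|a|_x$ is the right Dedekind section of $|a|$; $|aT|_x=|a|\cdot|T|_x$; $|f+f'|_x\le\max\{|f|_x,|f'|_x\}$. It is bounded if $|aT-b|_x\le$ the right Dedekind section of $\max\{|a|R,|b|\}$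 for all $a,b\in K$. A formal ball is a pair $(k,q)\in K_R\times\mathbb{Q}_{>0}$, written $B_q(k)$, with $B_{q'}(k')\subseteq B_q(k)$ meaning $|k-k'|<q$ and $q'\le q$. A filter of formal balls is an inhabited set $\mathcal{F}$ of formal balls, upward closed under $\subseteq$, such that any two members have a common member of $\mathcal{F}$ contained in both. It is $R$-good if moreover $B_q(k)\in\mathcal{F}$ for all $k\in K_R$ and rationals $q>R$, and whenever $B_q(k)\in\mathcal{F}$ there is $B_{q'}(k')\in\mathcal{F}$ with $q'<q$. *)

theory Defs
  imports Complex_Main "HOL-Computational_Algebra.Polynomial"
begin

definition nonarch_norm :: "('a::field \<Rightarrow> real) \<Rightarrow> bool" where
  "nonarch_norm nrm \<longleftrightarrow>
     (\<forall>x. 0 \<le> nrm x) \<and> (\<forall>x. nrm x = 0 \<longleftrightarrow> x = 0) \<and>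
     (\<forall>x y. nrm (x * y) = nrm x * nrm y) \<and>
     (\<forall>x y. nrm (x + y) \<le> max (nrm x) (nrm y))"

definition complete_wrt :: "('a::field \<Rightarrow> real) \<Rightarrow> bool" where
  "complete_wrt nrm \<longleftrightarrow>
     (\<forall>s :: nat \<Rightarrow> 'a.
        (\<forall>e>0. \<exists>N. \<forall>m\<ge>N. \<forall>n\<ge>N. nrm (s m - s n) < e) \<longrightarrow>
        (\<exists>l. \<forall>e>0. \<exists>N. \<forall>n\<ge>N. nrm (s n - l) < e))"

definition alg_closed :: "'a::field itself \<Rightarrow> bool" where
  "alg_closed _ \<longleftrightarrow> (\<forall>p :: 'a poly. 0 < degree p \<longrightarrow> (\<exists>x. poly p x = 0))"

text \<open>An element \<open>aT - b\<close> of \<open>A_Lin\<close> is represented by the pair \<open>(a, b)\<close>;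
  this representation is unique. The constant \<open>c \<in> K\<close>
  is \<open>(0, -c)\<close>, \<open>aT\<close> is \<open>(a, 0)\<close> and \<open>T\<close> is \<open>(1, 0)\<close>.\<close>
type_synonym 'a lin = "'a \<times> 'a"

definition lin_add :: "'a::field lin \<Rightarrow> 'a lin \<Rightarrow> 'a lin" where
  "lin_add f g = (fst f + fst g, snd f + snd g)"

type_synonym ureal = "rat set"

definition upper_real :: "ureal \<Rightarrow> bool" where
  "upper_real x \<longleftrightarrow> (\<forall>q\<in>x. \<forall>q'. q \<le> q' \<longrightarrow> q' \<in> x) \<and> (\<forall>q\<in>x. \<exists>q'\<in>x. q' < q)"

definition inhabited_ureal :: "ureal \<Rightarrow> bool" where
  "inhabited_ureal x \<longleftrightarrow> upper_real x \<and> x \<noteq> {}"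

text \<open>right Dedekind section of a real\<close>
definition rsec :: "real \<Rightarrow> ureal" where
  "rsec r = {q. r < real_of_rat q}"

text \<open>\<open>x \<le> y\<close> iff \<open>{q. y < q} \<subseteq> {q. x < q}\<close>\<close>
definition ule :: "ureal \<Rightarrow> ureal \<Rightarrow> bool" where
  "ule x y \<longleftrightarrow> y \<subseteq> x"

text \<open>maximum of upper reals: \<open>max x y < q\<close> iff \<open>x < q\<close> and \<open>y < q\<close>\<close>
definition umax :: "ureal \<Rightarrow> ureal \<Rightarrow> ureal" where
  "umax x y = x \<inter> y"

definition umult :: "ureal \<Rightarrow> ureal \<Rightarrow> ureal" where
  "umult x y = {q. \<exists>r\<in>x. \<exists>s\<in>y. r * s \<le> q}"

definition K_seminorm :: "('a::field \<Rightarrow> real) \<Rightarrow> ('a lin \<Rightarrow> ureal) \<Rightarrow> bool" where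
  "K_seminorm nrm sn \<longleftrightarrow>
     (\<forall>f. inhabited_ureal (sn f) \<and> ule (rsec 0) (sn f)) \<and>
     (\<forall>a. sn (0, - a) = rsec (nrm a)) \<and>
     (\<forall>a. sn (a, 0) = umult (rsec (nrm a)) (sn (1, 0))) \<and>
     (\<forall>f g. ule (sn (lin_add f g)) (umax (sn f) (sn g)))"

definition bounded_K_seminorm ::
    "('a::field \<Rightarrow> real) \<Rightarrow> real \<Rightarrow> ('a lin \<Rightarrow> ureal) \<Rightarrow> bool" where
  "bounded_K_seminorm nrm R sn \<longleftrightarrow> K_seminorm nrm sn \<and>
     (\<forall>a b. ule (sn (a, b)) (rsec (max (nrm a * R) (nrm b))))"

text \<open>A formal ball \<open>B_q(k)\<close> is the pair \<open>(k, q)\<close>.\<close>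
definition formal_ball :: "('a::field \<Rightarrow> real) \<Rightarrow> real \<Rightarrow> 'a \<times> rat \<Rightarrow> bool" where
  "formal_ball nrm R B \<longleftrightarrow> nrm (fst B) \<le> R \<and> 0 < snd B"

text \<open>\<open>ball_sub nrm B' B\<close>: \<open>B_{q'}(k') \<subseteq> B_q(k)\<close>\<close>
definition ball_sub :: "('a::field \<Rightarrow> real) \<Rightarrow> 'a \<times> rat \<Rightarrow> 'a \<times> rat \<Rightarrow> bool" where
  "ball_sub nrm B' B \<longleftrightarrow> nrm (fst B - fst B') < real_of_rat (snd B) \<and> snd B' \<le> snd B"

definition ball_filter :: "('a::field \<Rightarrow> real) \<Rightarrow> real \<Rightarrow> ('a \<times> rat) set \<Rightarrow> bool" where
  "ball_filter nrm R F \<longleftrightarrow>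
     (\<forall>B\<in>F. formal_ball nrm R B) \<and> F \<noteq> {} \<and>
     (\<forall>B'\<in>F. \<forall>B. formal_ball nrm R B \<and> ball_sub nrm B' B \<longrightarrow> B \<in> F) \<and>
     (\<forall>B1\<in>F. \<forall>B2\<in>F. \<exists>B3\<in>F. ball_sub nrm B3 B1 \<and> ball_sub nrm B3 B2)"

definition R_good :: "('a::field \<Rightarrow> real) \<Rightarrow> real \<Rightarrow> ('a \<times> rat) set \<Rightarrow> bool" where
  "R_good nrm R F \<longleftrightarrow> ball_filter nrm R F \<and>
     (\<forall>k q. nrm k \<le> R \<and> R < real_of_rat q \<longrightarrow> (k, q) \<in> F) \<and>
     (\<forall>k q. (k, q) \<in> F \<longrightarrow> (\<exists>k' q'. (k', q') \<in> F \<and> q' < q))"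

definition ball_norm :: "('a::field \<Rightarrow> real) \<Rightarrow> 'a \<times> rat \<Rightarrow> 'a lin \<Rightarrow> real" where
  "ball_norm nrm B f = max (nrm (fst f * fst B - snd f)) (nrm (fst f) * real_of_rat (snd B))"

text \<open>infimum over the filter, as an upper real: union of right sections\<close>
definition filter_norm :: "('a::field \<Rightarrow> real) \<Rightarrow> ('a \<times> rat) set \<Rightarrow> 'a lin \<Rightarrow> ureal" where
  "filter_norm nrm F f = (\<Union>B\<in>F. rsec (ball_norm nrm B f))"

end

theory Submission
  imports Defs
begin

text \<open>Each formal ball \<open>B\<close> gives an ultrametric seminorm \<open>|\<cdot>|_B\<close> on \<open>A_Lin\<close>, and
  passing to a smaller ball can only decrease it. Hence the infimum over \<open>F\<close> is ultrametric,
  since any two balls of \<open>F\<close> have a common sub-ball in \<open>F\<close>; it is homogeneous, since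
  \<open>|aT|_{B_q(k)} = |a| max(|k|, q)\<close> is \<open>|a|\<close> times \<open>|T|_{B_q(k)}\<close>; and it is bounded by
  \<open>|aT - b|_{B_q(0)} = max(|a| q, |b|)\<close> for every rational \<open>q > R\<close>, because an \<open>R\<close>-good
  filter contains these balls.\<close>

lemma nonarch_normD:
  assumes "nonarch_norm nrm"
  shows nonarch_norm_nonneg: "0 \<le> nrm x"
    and nonarch_norm_eq_0_iff: "nrm x = 0 \<longleftrightarrow> x = 0"
    and nonarch_norm_mult: "nrm (x * y) = nrm x * nrm y"
    and nonarch_norm_add_le: "nrm (x + y) \<le> max (nrm x) (nrm y)"
  using assms unfolding nonarch_norm_def by blast+

lemma nonarch_norm_zero:
  assumes "nonarch_norm nrm"
  shows "nrm 0 = 0"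
  using nonarch_norm_eq_0_iff[OF assms] by simp

lemma nonarch_norm_one:
  assumes "nonarch_norm nrm"
  shows "nrm (1 :: 'a::field) = 1"
proof -
  have "nrm (1 :: 'a) = nrm 1 * nrm 1"
    using nonarch_norm_mult[OF assms, of 1 1] by simp
  moreover have "nrm (1 :: 'a) \<noteq> 0"
    using nonarch_norm_eq_0_iff[OF assms] by simp
  ultimately show ?thesis by simp
qed

lemma nonarch_norm_minus:
  assumes "nonarch_norm nrm"
  shows "nrm (- x) = nrm (x :: 'a::field)"
proof -
  have "nrm (- 1 :: 'a) * nrm (- 1) = 1"
    using nonarch_norm_mult[OF assms, of "- 1 :: 'a" "- 1"] nonarch_norm_one[OF assms] by simp
  then have "nrm (- 1 :: 'a) = 1"
    using nonarch_norm_nonneg[OF assms, of "- 1 :: 'a"] square_eq_1_iff by force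
  then show ?thesis
    using nonarch_norm_mult[OF assms, of "- 1" x] by simp
qed

lemma nonarch_norm_diff_le:
  assumes "nonarch_norm nrm"
  shows "nrm (x - y) \<le> max (nrm x) (nrm (y :: 'a::field))"
  using nonarch_norm_add_le[OF assms, of x "- y"] nonarch_norm_minus[OF assms, of y] by simp

lemma exists_rat_gt_mult_less:
  fixes c x y :: real
  assumes "0 \<le> c" and "c * x < y"
  obtains r :: rat where "x < of_rat r" and "c * of_rat r < y"
proof (cases "c = 0")
  case True
  with assms obtain r :: rat where "x < of_rat r" "of_rat r < x + 1"
    using of_rat_dense[of x "x + 1"] by auto
  with True assms show ?thesis using that by simp
next
  case False
  with assms have "x < y / c" by (simp add: field_simps)
  then obtain r :: rat where "x < of_rat r" "of_rat r < y / c"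
    using of_rat_dense by blast
  with False assms show ?thesis using that by (simp add: field_simps)
qed

lemma upper_real_rsec: "upper_real (rsec r)"
  unfolding upper_real_def rsec_def
proof safe
  fix q q' :: rat
  assume "r < of_rat q" "q \<le> q'"
  then show "r < of_rat q'" by (simp add: less_le_trans of_rat_less_eq)
next
  fix q :: rat
  assume "r < of_rat q"
  then obtain q' :: rat where "r < of_rat q'" "of_rat q' < (of_rat q :: real)"
    using of_rat_dense by blast
  then show "\<exists>q'\<in>{q. r < of_rat q}. q' < q" by (auto simp: of_rat_less)
qed

lemma upper_real_UN:
  assumes "\<And>i. i \<in> I \<Longrightarrow> upper_real (X i)"
  shows "upper_real (\<Union>i\<in>I. X i)"
  using assms unfolding upper_real_def by blast

lemma rsec_nonempty: "rsec r \<noteq> {}"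
  using of_rat_dense[of r "r + 1"] unfolding rsec_def by auto

lemma ule_rsec_rsec: "r \<le> s \<Longrightarrow> ule (rsec r) (rsec s)"
  unfolding ule_def rsec_def by auto

lemma umult_UN_right: "umult X (\<Union>i\<in>I. Y i) = (\<Union>i\<in>I. umult X (Y i))"
  unfolding umult_def by blast

lemma umult_rsec:
  assumes "0 \<le> c" and "0 \<le> m"
  shows "umult (rsec c) (rsec m) = rsec (c * m)"
proof (rule set_eqI)
  fix q
  show "q \<in> umult (rsec c) (rsec m) \<longleftrightarrow> q \<in> rsec (c * m)"
  proof
    assume "q \<in> umult (rsec c) (rsec m)"
    then obtain r s where r: "c < of_rat r" and s: "m < of_rat s" and rs: "r * s \<le> q"
      unfolding umult_def rsec_def by auto
    have s_pos: "0 < (of_rat s :: real)" using s assms(2) by linarith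
    have "c * m \<le> c * of_rat s"
      using s assms(1) by (simp add: mult_left_mono)
    also have "\<dots> < of_rat r * of_rat s"
      using r s_pos by (rule mult_strict_right_mono)
    also have "\<dots> \<le> of_rat q"
      using rs by (metis of_rat_less_eq of_rat_mult)
    finally show "q \<in> rsec (c * m)" unfolding rsec_def by simp
  next
    assume "q \<in> rsec (c * m)"
    then obtain s :: rat where s: "m < of_rat s" and cs: "c * of_rat s < of_rat q"
      using exists_rat_gt_mult_less[OF assms(1)] unfolding rsec_def by auto
    have s_pos: "0 < (of_rat s :: real)" using s assms(2) by linarith
    then have "c < of_rat (q / s)"
      using cs by (simp add: of_rat_divide pos_less_divide_eq)
    moreover have "q / s * s \<le> q" using s_pos by simp
    ultimately show "q \<in> umult (rsec c) (rsec m)"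
      using s unfolding umult_def rsec_def by blast
  qed
qed

lemma ball_norm_nonneg:
  assumes "nonarch_norm nrm"
  shows "0 \<le> ball_norm nrm B f"
  unfolding ball_norm_def using nonarch_norm_nonneg[OF assms] by (simp add: le_max_iff_disj)

lemma ball_norm_const:
  assumes "nonarch_norm nrm"
  shows "ball_norm nrm B (0, - a) = nrm a"
  unfolding ball_norm_def
  using nonarch_norm_minus[OF assms] nonarch_norm_zero[OF assms] nonarch_norm_nonneg[OF assms]
  by simp

lemma ball_norm_monom:
  assumes "nonarch_norm nrm"
  shows "ball_norm nrm (k, q) (a, 0) = nrm a * max (nrm k) (of_rat q)"
  unfolding ball_norm_def
  using nonarch_norm_nonneg[OF assms, of a]
  by (simp add: nonarch_norm_mult[OF assms] max_mult_distrib_left)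

lemma ball_norm_mono:
  assumes "nonarch_norm nrm" and "ball_sub nrm B' B"
  shows "ball_norm nrm B' f \<le> ball_norm nrm B f"
proof -
  obtain k q k' q' a b where B: "B = (k, q)" "B' = (k', q')" and f: "f = (a, b)"
    by (metis prod.exhaust)
  have sub: "nrm (k - k') < of_rat q" "q' \<le> q"
    using assms(2) B unfolding ball_sub_def by auto
  have "a * k' - b = (a * k - b) - a * (k - k')" by (simp add: algebra_simps)
  then have "nrm (a * k' - b) \<le> max (nrm (a * k - b)) (nrm a * nrm (k - k'))"
    by (metis nonarch_norm_diff_le[OF assms(1)] nonarch_norm_mult[OF assms(1)])
  moreover have "nrm a * nrm (k - k') \<le> nrm a * of_rat q"
    using sub(1) nonarch_norm_nonneg[OF assms(1), of a] by (simp add: mult_left_mono)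
  moreover have "nrm a * of_rat q' \<le> nrm a * of_rat q"
    using sub(2) nonarch_norm_nonneg[OF assms(1), of a] by (simp add: mult_left_mono of_rat_less_eq)
  ultimately show ?thesis unfolding ball_norm_def B f by auto
qed

lemma ball_norm_lin_add_le:
  assumes "nonarch_norm nrm" and "0 \<le> snd B"
  shows "ball_norm nrm B (lin_add f g) \<le> max (ball_norm nrm B f) (ball_norm nrm B g)"
proof -
  obtain k q a b a' b' where B: "B = (k, q)" and f: "f = (a, b)" and g: "g = (a', b')"
    by (metis prod.exhaust)
  have "(a + a') * k - (b + b') = (a * k - b) + (a' * k - b')" by (simp add: algebra_simps)
  then have "nrm ((a + a') * k - (b + b')) \<le> max (nrm (a * k - b)) (nrm (a' * k - b'))"
    by (metis nonarch_norm_add_le[OF assms(1)])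
  moreover have "nrm (a + a') * of_rat q \<le> max (nrm a * of_rat q) (nrm a' * of_rat q)"
  proof -
    have "(0 :: real) \<le> of_rat q" using assms(2) B by simp
    then show ?thesis
      using mult_right_mono[OF nonarch_norm_add_le[OF assms(1), of a a']]
      by (simp add: max_mult_distrib_right)
  qed
  ultimately show ?thesis unfolding ball_norm_def B f g lin_add_def by auto
qed

lemma mem_filter_norm: "q \<in> filter_norm nrm F f \<longleftrightarrow> (\<exists>B\<in>F. ball_norm nrm B f < of_rat q)"
  unfolding filter_norm_def rsec_def by auto

lemma filter_norm_inhabited_nonneg:
  assumes "nonarch_norm nrm" and "F \<noteq> {}"
  shows "inhabited_ureal (filter_norm nrm F f)" and "ule (rsec 0) (filter_norm nrm F f)"
proof -
  show "inhabited_ureal (filter_norm nrm F f)"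
    using assms(2) rsec_nonempty
    unfolding filter_norm_def inhabited_ureal_def by (auto intro: upper_real_UN upper_real_rsec)
  show "ule (rsec 0) (filter_norm nrm F f)"
    using ule_rsec_rsec[OF ball_norm_nonneg[OF assms(1)]]
    unfolding filter_norm_def ule_def by blast
qed

lemma filter_norm_const:
  assumes "nonarch_norm nrm" and "F \<noteq> {}"
  shows "filter_norm nrm F (0, - a) = rsec (nrm a)"
  using assms(2) unfolding filter_norm_def ball_norm_const[OF assms(1)] by auto

lemma filter_norm_monom:
  assumes "nonarch_norm nrm"
  shows "filter_norm nrm F (a, 0) = umult (rsec (nrm a)) (filter_norm nrm F (1, 0))"
proof -
  have "ball_norm nrm B (a, 0) = nrm a * ball_norm nrm B (1, 0)" for B
    using ball_norm_monom[OF assms, of "fst B" "snd B"] nonarch_norm_one[OF assms] by simp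
  then show ?thesis
    unfolding filter_norm_def umult_UN_right
    using umult_rsec nonarch_norm_nonneg[OF assms] ball_norm_nonneg[OF assms] by simp
qed

lemma filter_norm_lin_add_le:
  assumes "nonarch_norm nrm" and "ball_filter nrm R F"
  shows "ule (filter_norm nrm F (lin_add f g)) (umax (filter_norm nrm F f) (filter_norm nrm F g))"
  unfolding ule_def umax_def
proof
  fix q assume "q \<in> filter_norm nrm F f \<inter> filter_norm nrm F g"
  then obtain B1 B2 where B1: "B1 \<in> F" "ball_norm nrm B1 f < of_rat q"
    and B2: "B2 \<in> F" "ball_norm nrm B2 g < of_rat q"
    unfolding Int_iff mem_filter_norm by blast
  then obtain B3 where B3: "B3 \<in> F" "ball_sub nrm B3 B1" "ball_sub nrm B3 B2"
    using assms(2) unfolding ball_filter_def by blast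
  then have "0 \<le> snd B3"
    using assms(2) unfolding ball_filter_def formal_ball_def by fastforce
  have "ball_norm nrm B3 f < of_rat q" "ball_norm nrm B3 g < of_rat q"
    using ball_norm_mono[OF assms(1)] B1 B2 B3 by (meson le_less_trans)+
  then have "ball_norm nrm B3 (lin_add f g) < of_rat q"
    using ball_norm_lin_add_le[OF assms(1) \<open>0 \<le> snd B3\<close>, of f g] by simp
  then show "q \<in> filter_norm nrm F (lin_add f g)"
    using B3(1) unfolding mem_filter_norm by blast
qed

lemma filter_norm_bounded:
  assumes "nonarch_norm nrm" and "0 \<le> R" and "R_good nrm R F"
  shows "ule (filter_norm nrm F (a, b)) (rsec (max (nrm a * R) (nrm b)))"
  unfolding ule_def
proof
  fix q assume "q \<in> rsec (max (nrm a * R) (nrm b))"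
  then have q: "nrm a * R < of_rat q" "nrm b < of_rat q" unfolding rsec_def by auto
  then obtain r :: rat where r: "R < of_rat r" "nrm a * of_rat r < of_rat q"
    using exists_rat_gt_mult_less nonarch_norm_nonneg[OF assms(1)] by metis
  then have "(0, r) \<in> F"
    using assms nonarch_norm_zero[OF assms(1)] unfolding R_good_def by simp
  moreover have "ball_norm nrm (0, r) (a, b) < of_rat q"
    unfolding ball_norm_def using q r nonarch_norm_minus[OF assms(1)] by simp
  ultimately show "q \<in> filter_norm nrm F (a, b)" unfolding mem_filter_norm by blast
qed

theorem claim2p18:
  fixes nrm :: "'a::field \<Rightarrow> real" and R :: real and F :: "('a \<times> rat) set"
  assumes "alg_closed TYPE('a)"
    and "nonarch_norm nrm"
    and "complete_wrt nrm"
    and "0 < R"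
    and "R_good nrm R F"
  shows "bounded_K_seminorm nrm R (filter_norm nrm F)"
proof -
  have filter: "ball_filter nrm R F" and "F \<noteq> {}"
    using assms(5) unfolding R_good_def ball_filter_def by blast+
  show ?thesis
    unfolding bounded_K_seminorm_def K_seminorm_def
    using filter_norm_inhabited_nonneg[OF assms(2) \<open>F \<noteq> {}\<close>]
      filter_norm_const[OF assms(2) \<open>F \<noteq> {}\<close>] filter_norm_monom[OF assms(2)]
      filter_norm_lin_add_le[OF assms(2) filter]
      filter_norm_bounded[OF assms(2) less_imp_le[OF assms(4)] assms(5)]
    by blast
qed

end
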